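(* Let $\frac1{\sqrt2}<p<1$. There is $c=c(p)>0$ such that for any $a>0$ and any $n$, any local routing algorithm between the two roots of $TT_n$ (in $TT_{n,p}$) makes at least $a p^{-n}$ queries with probability at least $1-ca$.
   Context: The double binary tree $TT_n$ is obtained by taking two complete binary trees of uniform depth $n$ and identifying their corresponding leaves; its roots are the roots of the two trees. $TT_{n,p}$ is the random subgraph in which each edge is open independently with probability $p$. A routing algorithm between vertices $u,v$ may probe whether edges are open and outputs an open path from $u$ to $v$ if one exists; it is local if the first edge it probes is adjacent to $u$ and subsequently it probes only edges having an endpoint to which it has already established an open path from $u$. The number of queries is considered conditioned on the event that the two roots are connected by an open path. *)

theory Defs
  imports "HOL-Probability.Probability"
begin

text \<open>A vertex is a pair (t, s): t selects one of the two binary trees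
  (True = first/top tree, False = second/bottom tree) and s is the binary
  string describing the path from the root. Leaves (length s = n) are shared;
  their canonical representative uses t = False.\<close>

type_synonym vtx = "bool \<times> bool list"

definition node :: "nat \<Rightarrow> bool \<Rightarrow> bool list \<Rightarrow> vtx" where
  "node n t s = (if length s = n then (False, s) else (t, s))"

text \<open>An edge (t, w) with 1 \<le> length w \<le> n is the edge of tree t between the
  vertex w and its parent (butlast w).\<close>

type_synonym edge = "bool \<times> bool list"

definition tt_edges :: "nat \<Rightarrow> edge set" where
  "tt_edges n = {(t, w). 1 \<le> length w \<and> length w \<le> n}"

definition endpoints :: "nat \<Rightarrow> edge \<Rightarrow> vtx set" where
  "endpoints n e = {node n (fst e) (butlast (snd e)), node n (fst e) (snd e)}"

definition root :: "nat \<Rightarrow> bool \<Rightarrow> vtx" where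
  "root n t = node n t []"

definition adj_in :: "nat \<Rightarrow> edge set \<Rightarrow> vtx \<Rightarrow> vtx \<Rightarrow> bool" where
  "adj_in n F x y \<longleftrightarrow> (\<exists>e\<in>F \<inter> tt_edges n. x \<noteq> y \<and> endpoints n e = {x, y})"

definition conn_in :: "nat \<Rightarrow> edge set \<Rightarrow> vtx \<Rightarrow> vtx \<Rightarrow> bool" where
  "conn_in n F x y \<longleftrightarrow> (adj_in n F)\<^sup>*\<^sup>* x y"

definition open_edges :: "(edge \<Rightarrow> bool) \<Rightarrow> edge set" where
  "open_edges \<omega> = {e. \<omega> e}"

definition TT :: "nat \<Rightarrow> real \<Rightarrow> (edge \<Rightarrow> bool) pmf" where
  "TT n p = Pi_pmf (tt_edges n) False (\<lambda>_. bernoulli_pmf p)"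

text \<open>A (deterministic, adaptive) routing algorithm is a strategy mapping the
  history of probes (edge probed, whether it was open) to the next edge to
  probe, or None to stop.\<close>

type_synonym strategy = "(edge \<times> bool) list \<Rightarrow> edge option"

fun hist :: "strategy \<Rightarrow> (edge \<Rightarrow> bool) \<Rightarrow> nat \<Rightarrow> (edge \<times> bool) list" where
  "hist S \<omega> 0 = []"
| "hist S \<omega> (Suc k) = (case S (hist S \<omega> k) of None \<Rightarrow> hist S \<omega> k
                        | Some e \<Rightarrow> hist S \<omega> k @ [(e, \<omega> e)])"

definition revealed_open :: "(edge \<times> bool) list \<Rightarrow> edge set" where
  "revealed_open h = {e. (e, True) \<in> set h}"

definition local_routing :: "nat \<Rightarrow> vtx \<Rightarrow> vtx \<Rightarrow> strategy \<Rightarrow> bool" where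
  "local_routing n u v S \<longleftrightarrow>
     (\<forall>\<omega> k e. S (hist S \<omega> k) = Some e \<longrightarrow>
        e \<in> tt_edges n \<and> (\<exists>x\<in>endpoints n e. conn_in n (revealed_open (hist S \<omega> k)) u x)) \<and>
     (\<forall>\<omega>. conn_in n (open_edges \<omega>) u v \<longrightarrow>
        (\<exists>k. S (hist S \<omega> k) = None) \<and>
        (\<forall>k. S (hist S \<omega> k) = None \<longrightarrow> conn_in n (revealed_open (hist S \<omega> k)) u v))"

definition num_queries :: "strategy \<Rightarrow> (edge \<Rightarrow> bool) \<Rightarrow> nat" where
  "num_queries S \<omega> = (LEAST k. S (hist S \<omega> k) = None)"

end

theory Submission
  imports Defs
begin

text \<open>First, the roots of \<open>TT\<^sub>n\<^sub>+\<^sub>1\<close> are joined as soon as, for some child \<open>b\<close>,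
  both edges from the roots to \<open>b\<close> are open and the two roots of the copy of \<open>TT\<^sub>n\<close> below \<open>b\<close>
  are joined. The two children give independent events, so the connection probability satisfies
  \<open>c\<^sub>n\<^sub>+\<^sub>1 \<ge> 2p\<^sup>2c\<^sub>n - (p\<^sup>2c\<^sub>n)\<^sup>2\<close>, and by monotonicity it stays above the positive fixed point
  \<open>(2p\<^sup>2 - 1) / p\<^sup>4\<close> of this map.

  Second, a local algorithm started at the top root can only reach the bottom root by revealing an
  edge of the open cluster of the bottom root inside the bottom tree. By locality, the first probed
  edge of that cluster is adjacent to a vertex already joined to the top root, hence is a leaf edge
  \<open>(False, l)\<close>, and none of the \<open>n\<close> edges on the bottom path to \<open>l\<close> has been probed before. Those
  edges are independent of the history, so the \<open>i\<close>-th probe is of this kind with probability at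
  most \<open>p\<^sup>n\<close>, and a union bound over the first \<open>a p\<^sup>-\<^sup>n\<close> probes gives probability at most \<open>a\<close> of
  stopping early. Dividing by the connection probability yields \<open>c = p\<^sup>4 / (2p\<^sup>2 - 1)\<close>.\<close>

section \<open>Independence in product distributions\<close>

lemma prob_pair_pmf_Times:
  "measure_pmf.prob (pair_pmf M N) (A \<times> B) = measure_pmf.prob M A * measure_pmf.prob N B"
proof -
  have "measure_pmf.prob (pair_pmf M N) (A \<times> B)
      = measure_pmf.prob (pair_pmf M N) ((A \<inter> set_pmf M) \<times> (B \<inter> set_pmf N))"
    by (subst measure_Int_set_pmf[symmetric]) (simp add: Times_Int_Times)
  also have "\<dots> = measure_pmf.prob M (A \<inter> set_pmf M) * measure_pmf.prob N (B \<inter> set_pmf N)"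
    by (intro measure_pmf_prob_product) (auto intro: countable_subset)
  finally show ?thesis
    by (simp add: measure_Int_set_pmf)
qed

lemma prob_Pi_pmf_Int_indep:
  fixes A B :: "('a \<Rightarrow> 'b) set"
  assumes "finite I" and "J \<subseteq> I"
    and A: "\<And>f g. \<forall>x\<in>J. f x = g x \<Longrightarrow> f \<in> A \<longleftrightarrow> g \<in> A"
    and B: "\<And>f g. \<forall>x\<in>I - J. f x = g x \<Longrightarrow> f \<in> B \<longleftrightarrow> g \<in> B"
  shows "measure_pmf.prob (Pi_pmf I d P) (A \<inter> B)
       = measure_pmf.prob (Pi_pmf I d P) A * measure_pmf.prob (Pi_pmf I d P) B"
proof -
  define glue :: "('a \<Rightarrow> 'b) \<times> ('a \<Rightarrow> 'b) \<Rightarrow> 'a \<Rightarrow> 'b"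
    where "glue = (\<lambda>(f, g) x. if x \<in> J then f x else g x)"
  have "Pi_pmf I d P = Pi_pmf (J \<union> (I - J)) d P"
    using \<open>J \<subseteq> I\<close> by (simp add: Un_absorb1)
  also have "\<dots> = map_pmf glue (pair_pmf (Pi_pmf J d P) (Pi_pmf (I - J) d P))"
    unfolding glue_def using \<open>finite I\<close> \<open>J \<subseteq> I\<close> by (intro Pi_pmf_union) (auto intro: finite_subset)
  finally have split: "Pi_pmf I d P = \<dots>" .
  have "glue (f, g) \<in> A \<longleftrightarrow> f \<in> A" "glue (f, g) \<in> B \<longleftrightarrow> g \<in> B" for f g
    by (rule A B; simp add: glue_def)+
  then have "glue -` (A \<inter> B) = A \<times> B" "glue -` A = A \<times> UNIV" "glue -` B = UNIV \<times> B"
    by auto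
  then show ?thesis
    unfolding split measure_map_pmf by (simp add: prob_pair_pmf_Times)
qed

lemma prob_Pi_pmf_bernoulli_all:
  assumes "finite I" "F \<subseteq> I" "0 \<le> p" "p \<le> 1"
  shows "measure_pmf.prob (Pi_pmf I False (\<lambda>_. bernoulli_pmf p)) {\<omega>. \<forall>e\<in>F. \<omega> e} = p ^ card F"
proof -
  have "{\<omega>. \<forall>e\<in>F. \<omega> e} = Pi I (\<lambda>e. if e \<in> F then {True} else UNIV)"
    using assms(2) by (auto simp: Pi_def)
  then have "measure_pmf.prob (Pi_pmf I False (\<lambda>_. bernoulli_pmf p)) {\<omega>. \<forall>e\<in>F. \<omega> e}
      = (\<Prod>e\<in>I. if e \<in> F then p else 1)"
    using assms by (simp add: measure_Pi_pmf_Pi measure_pmf_single if_distrib cong: if_cong)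
  also have "\<dots> = p ^ card F"
    using assms by (simp add: prod.If_cases Int_absorb1)
  finally show ?thesis .
qed

lemma prob_Diff_div_ge:
  assumes "B \<subseteq> C" "measure_pmf.prob M B \<le> a" "0 < d" "d \<le> measure_pmf.prob M C"
  shows "1 - a / d \<le> measure_pmf.prob M (C - B) / measure_pmf.prob M C"
proof -
  have C: "0 < measure_pmf.prob M C"
    using assms by linarith
  have "measure_pmf.prob M B / measure_pmf.prob M C \<le> a / d"
    using assms C by (intro frac_le) (auto intro: order_trans[OF measure_nonneg])
  also have "measure_pmf.prob M B / measure_pmf.prob M C
      = 1 - measure_pmf.prob M (C - B) / measure_pmf.prob M C"
    using assms(1) C by (simp add: measure_pmf.finite_measure_Diff field_simps)
  finally show ?thesis by simp
qed

lemma set_histD: "(e, b) \<in> set (hist S \<omega> i) \<Longrightarrow> (\<exists>j<i. S (hist S \<omega> j) = Some e) \<and> b = \<omega> e"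
proof (induction i)
  case (Suc i)
  then show ?case
    by (auto split: option.splits) (metis less_SucI)+
qed simp

lemma hist_cong:
  "(\<And>j e. j < i \<Longrightarrow> S (hist S \<omega> j) = Some e \<Longrightarrow> \<omega>' e = \<omega> e) \<Longrightarrow> hist S \<omega>' i = hist S \<omega> i"
proof (induction i)
  case (Suc i)
  then have "hist S \<omega>' i = hist S \<omega> i"
    by (meson less_SucI)
  with Suc.prems show ?case
    by (auto split: option.splits)
qed simp

lemma finite_tt_edges: "finite (tt_edges n)"
proof -
  have "tt_edges n \<subseteq> UNIV \<times> {w. length w \<le> n}"
    by (auto simp: tt_edges_def)
  moreover have "finite ((UNIV :: bool set) \<times> {w :: bool list. length w \<le> n})"
    using finite_lists_length_le[of "UNIV :: bool set" n] by (intro finite_cartesian_product) simp_all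
  ultimately show ?thesis
    by (rule finite_subset)
qed

lemma node_False [simp]: "node n False s = (False, s)"
  by (simp add: node_def)

lemma root_True: "1 \<le> n \<Longrightarrow> root n True = (True, [])"
  by (simp add: root_def node_def)

lemma root_False: "root n False = (False, [])"
  by (simp add: root_def)

lemma conn_in_Int_tt_edges: "conn_in n (F \<inter> tt_edges n) x y = conn_in n F x y"
proof -
  have "adj_in n (F \<inter> tt_edges n) = adj_in n F"
    by (intro ext) (simp add: adj_in_def Int_assoc)
  then show ?thesis
    by (simp add: conn_in_def)
qed

abbreviation roots_conn :: "nat \<Rightarrow> (edge \<Rightarrow> bool) \<Rightarrow> bool" where
  "roots_conn n \<omega> \<equiv> conn_in n (open_edges \<omega>) (root n True) (root n False)"

lemma local_routing_probe:
  assumes "local_routing n u v S" "S (hist S \<omega> k) = Some e"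
  shows "e \<in> tt_edges n" "\<exists>x\<in>endpoints n e. conn_in n (revealed_open (hist S \<omega> k)) u x"
  using assms unfolding local_routing_def by blast+

lemma local_routing_num_queries:
  assumes "local_routing n u v S" "conn_in n (open_edges \<omega>) u v"
  shows "S (hist S \<omega> (num_queries S \<omega>)) = None"
    and "conn_in n (revealed_open (hist S \<omega> (num_queries S \<omega>))) u v"
proof -
  have stops: "\<exists>k. S (hist S \<omega> k) = None"
    and stop: "\<And>k. S (hist S \<omega> k) = None \<Longrightarrow> conn_in n (revealed_open (hist S \<omega> k)) u v"
    using assms unfolding local_routing_def by blast+
  from stops show "S (hist S \<omega> (num_queries S \<omega>)) = None"
    unfolding num_queries_def by (rule LeastI_ex)
  then show "conn_in n (revealed_open (hist S \<omega> (num_queries S \<omega>))) u v"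
    by (rule stop)
qed

section \<open>Local routing has to probe a fresh open leaf path\<close>

definition bottom_path :: "bool list \<Rightarrow> edge set" where
  "bottom_path s = (\<lambda>k. (False, take k s)) ` {1..length s}"

definition bottom_open :: "(edge \<Rightarrow> bool) \<Rightarrow> bool list \<Rightarrow> bool" where
  "bottom_open \<omega> s \<longleftrightarrow> (\<forall>e\<in>bottom_path s. \<omega> e)"

lemma bottom_path_take: "bottom_path (take m s) \<subseteq> bottom_path s"
  by (auto simp: bottom_path_def min_def)

lemma bottom_open_take: "bottom_open \<omega> s \<Longrightarrow> bottom_open \<omega> (take m s)"
  using bottom_path_take by (auto simp: bottom_open_def)

lemma bottom_path_butlast:
  "s \<noteq> [] \<Longrightarrow> bottom_path s = insert (False, s) (bottom_path (butlast s))"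
proof -
  assume "s \<noteq> []"
  then have "{1..length s} = insert (length s) {1..length (butlast s)}"
    by (auto simp: Suc_le_eq)
  moreover have "take k (butlast s) = take k s" if "k \<le> length (butlast s)" for k
    using that by (simp add: butlast_conv_take)
  ultimately show ?thesis
    unfolding bottom_path_def by (auto simp: image_iff)
qed

lemma bottom_path_subset_tt_edges: "length s \<le> n \<Longrightarrow> bottom_path s \<subseteq> tt_edges n"
  by (auto simp: bottom_path_def tt_edges_def)

lemma card_bottom_path: "card (bottom_path s) = length s"
proof -
  have "inj_on (\<lambda>k. (False, take k s)) {1..length s}"
    by (rule inj_onI) (metis atLeastAtMost_iff length_take min.absorb2 prod.inject)
  then show ?thesis
    by (simp add: bottom_path_def card_image)
qed

definition bottom_cluster_edges :: "nat \<Rightarrow> (edge \<Rightarrow> bool) \<Rightarrow> edge set" where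
  "bottom_cluster_edges n \<omega> = {(False, w) | w. 1 \<le> length w \<and> length w \<le> n \<and> bottom_open \<omega> w}"

text \<open>Leaves are left out: they are shared with the top tree.\<close>

definition bottom_cluster_inner :: "nat \<Rightarrow> (edge \<Rightarrow> bool) \<Rightarrow> vtx set" where
  "bottom_cluster_inner n \<omega> = {(False, s) | s. length s < n \<and> bottom_open \<omega> s}"

lemma root_False_in_bottom_cluster_inner: "1 \<le> n \<Longrightarrow> root n False \<in> bottom_cluster_inner n \<omega>"
  by (simp add: root_False bottom_cluster_inner_def bottom_open_def bottom_path_def)

lemma bottom_path_subset_bottom_cluster_edges:
  assumes "length s \<le> n" "bottom_open \<omega> s"
  shows "bottom_path s \<subseteq> bottom_cluster_edges n \<omega>"
proof
  fix e
  assume "e \<in> bottom_path s"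
  then obtain k where "e = (False, take k s)" "1 \<le> k" "k \<le> length s"
    by (auto simp: bottom_path_def)
  with assms show "e \<in> bottom_cluster_edges n \<omega>"
    by (auto simp: bottom_cluster_edges_def bottom_open_take)
qed

lemma open_edge_at_bottom_cluster_inner:
  assumes "e \<in> tt_edges n" "\<omega> e" "z \<in> endpoints n e" "z \<in> bottom_cluster_inner n \<omega>"
  shows "e \<in> bottom_cluster_edges n \<omega>"
proof -
  obtain t w where e: "e = (t, w)" "w \<noteq> []" "length w \<le> n"
    using assms(1) by (auto simp: tt_edges_def Suc_le_eq)
  obtain s where z: "z = (False, s)" "length s < n" "bottom_open \<omega> s"
    using assms(4) by (auto simp: bottom_cluster_inner_def)
  have "\<not> t" and "s = butlast w \<or> s = w"
    using assms(3) e z by (auto simp: endpoints_def node_def split: if_splits)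
  then have "bottom_open \<omega> w"
    using assms(2) e z bottom_path_butlast[of w] by (auto simp: bottom_open_def)
  then show ?thesis
    using e \<open>\<not> t\<close> by (auto simp: bottom_cluster_edges_def Suc_le_eq)
qed

lemma conn_in_bottom_cluster_inner:
  assumes F: "\<And>e. e \<in> F \<Longrightarrow> \<omega> e \<and> e \<notin> bottom_cluster_edges n \<omega>"
    and "conn_in n F y z" "z \<in> bottom_cluster_inner n \<omega>"
  shows "y = z"
  using \<open>conn_in n F y z\<close> unfolding conn_in_def
proof (cases rule: rtranclp.cases)
  case (rtrancl_into_rtrancl x)
  then obtain e where "e \<in> F" "e \<in> tt_edges n" "z \<in> endpoints n e"
    by (auto simp: adj_in_def)
  then show ?thesis
    using F open_edge_at_bottom_cluster_inner[OF _ _ _ assms(3)] by blast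
qed simp

lemma first_bottom_cluster_probe_at_leaf:
  assumes "1 \<le> n" "local_routing n (root n True) (root n False) S"
    and probe: "S (hist S \<omega> i) = Some e" "e \<in> bottom_cluster_edges n \<omega>"
    and before: "\<forall>j<i. \<forall>e'. S (hist S \<omega> j) = Some e' \<longrightarrow> e' \<notin> bottom_cluster_edges n \<omega>"
  shows "\<exists>l. e = (False, l) \<and> length l = n \<and> bottom_open \<omega> l"
proof -
  obtain w where w: "e = (False, w)" "length w \<le> n" "bottom_open \<omega> w"
    using probe(2) by (auto simp: bottom_cluster_edges_def)
  obtain x where x: "x \<in> endpoints n e" "conn_in n (revealed_open (hist S \<omega> i)) (root n True) x"
    using local_routing_probe(2)[OF assms(2) probe(1)] by blast
  have "x = (False, butlast w) \<or> x = (False, w)"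
    using x(1) w(1) by (simp add: endpoints_def)
  moreover have "x \<notin> bottom_cluster_inner n \<omega>"
  proof
    assume inner: "x \<in> bottom_cluster_inner n \<omega>"
    have "\<omega> e' \<and> e' \<notin> bottom_cluster_edges n \<omega>" if "e' \<in> revealed_open (hist S \<omega> i)" for e'
      using that set_histD[of e' True S \<omega> i] before unfolding revealed_open_def by blast
    from conn_in_bottom_cluster_inner[OF this x(2) inner] have "x = root n True" ..
    with inner \<open>1 \<le> n\<close> show False
      by (simp add: root_True bottom_cluster_inner_def)
  qed
  moreover have "(False, butlast w) \<in> bottom_cluster_inner n \<omega>" "(False, w) \<in> bottom_cluster_inner n \<omega>"
    if "length w < n"
    using that w by (auto simp: bottom_cluster_inner_def butlast_conv_take bottom_open_take)
  ultimately have "\<not> length w < n"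
    by blast
  with w(2) have "length w = n"
    by simp
  with w show ?thesis by blast
qed

lemma local_routing_probes_bottom_cluster:
  assumes "1 \<le> n" "local_routing n (root n True) (root n False) S" "roots_conn n \<omega>"
  shows "\<exists>j < num_queries S \<omega>. \<exists>e. S (hist S \<omega> j) = Some e \<and> e \<in> bottom_cluster_edges n \<omega>"
proof (rule ccontr)
  let ?H = "hist S \<omega> (num_queries S \<omega>)"
  assume "\<not> ?thesis"
  then have "\<omega> e \<and> e \<notin> bottom_cluster_edges n \<omega>" if "e \<in> revealed_open ?H" for e
    using that set_histD[of e True S \<omega>] unfolding revealed_open_def by blast
  from conn_in_bottom_cluster_inner[OF this local_routing_num_queries(2)[OF assms(2,3)]]
  show False
    using root_False_in_bottom_cluster_inner[OF assms(1)] assms(1) by (simp add: root_True root_False)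
qed

definition fresh_leaf_probe :: "strategy \<Rightarrow> nat \<Rightarrow> bool list \<Rightarrow> (edge \<Rightarrow> bool) set" where
  "fresh_leaf_probe S i l = {\<omega>. S (hist S \<omega> i) = Some (False, l) \<and>
     (\<forall>j<i. \<forall>e. S (hist S \<omega> j) = Some e \<longrightarrow> e \<notin> bottom_path l)}"

lemma local_routing_fresh_open_leaf_probe:
  assumes "1 \<le> n" "local_routing n (root n True) (root n False) S" "roots_conn n \<omega>"
  shows "\<exists>i < num_queries S \<omega>. \<exists>l. length l = n \<and> \<omega> \<in> fresh_leaf_probe S i l \<and> bottom_open \<omega> l"
proof -
  let ?Q = "num_queries S \<omega>"
  define probes_cluster where
    "probes_cluster = (\<lambda>i. \<exists>e. S (hist S \<omega> i) = Some e \<and> e \<in> bottom_cluster_edges n \<omega>)"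
  obtain j where "j < ?Q" "probes_cluster j"
    using local_routing_probes_bottom_cluster[OF assms] unfolding probes_cluster_def by blast
  define i where "i = (LEAST i. probes_cluster i)"
  have "i < ?Q"
    using Least_le[of probes_cluster j] \<open>probes_cluster j\<close> \<open>j < ?Q\<close> unfolding i_def by linarith
  obtain e where e: "S (hist S \<omega> i) = Some e" "e \<in> bottom_cluster_edges n \<omega>"
    using LeastI[of probes_cluster j] \<open>probes_cluster j\<close> unfolding i_def probes_cluster_def by blast
  have before: "\<forall>j<i. \<forall>e'. S (hist S \<omega> j) = Some e' \<longrightarrow> e' \<notin> bottom_cluster_edges n \<omega>"
    using not_less_Least[of _ probes_cluster] unfolding i_def probes_cluster_def by blast
  obtain l where l: "e = (False, l)" "length l = n" "bottom_open \<omega> l"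
    using first_bottom_cluster_probe_at_leaf[OF assms(1,2) e before] by blast
  have "bottom_path l \<subseteq> bottom_cluster_edges n \<omega>"
    using l by (simp add: bottom_path_subset_bottom_cluster_edges)
  then have "\<omega> \<in> fresh_leaf_probe S i l"
    using e(1) l(1) before by (auto simp: fresh_leaf_probe_def)
  with \<open>i < ?Q\<close> l show ?thesis by blast
qed

lemma fresh_leaf_probe_cong:
  assumes probes: "\<And>\<omega> k e. S (hist S \<omega> k) = Some e \<Longrightarrow> e \<in> tt_edges n"
    and "\<omega> \<in> fresh_leaf_probe S i l" and agree: "\<forall>e\<in>tt_edges n - bottom_path l. \<omega>' e = \<omega> e"
  shows "\<omega>' \<in> fresh_leaf_probe S i l"
proof -
  have "hist S \<omega>' j = hist S \<omega> j" if "j \<le> i" for j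
  proof (rule hist_cong)
    fix j' e
    assume "j' < j" "S (hist S \<omega> j') = Some e"
    moreover from this have "j' < i"
      using that by simp
    ultimately have "e \<in> tt_edges n - bottom_path l"
      using probes assms(2) unfolding fresh_leaf_probe_def by blast
    then show "\<omega>' e = \<omega> e"
      using agree by blast
  qed
  with assms(2) show ?thesis
    by (auto simp: fresh_leaf_probe_def)
qed

lemma prob_fresh_open_leaf_probe_le:
  assumes probes: "\<And>\<omega> k e. S (hist S \<omega> k) = Some e \<Longrightarrow> e \<in> tt_edges n"
    and "0 \<le> p" "p \<le> 1"
  shows "measure_pmf.prob (TT n p)
      {\<omega>. \<exists>l. length l = n \<and> \<omega> \<in> fresh_leaf_probe S i l \<and> bottom_open \<omega> l} \<le> p ^ n"
proof -
  let ?P = "measure_pmf.prob (TT n p)"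
  define L where "L = {l :: bool list. length l = n}"
  have "finite L"
    unfolding L_def using finite_lists_length_eq[of "UNIV :: bool set" n] by simp
  have indep: "?P ({\<omega>. bottom_open \<omega> l} \<inter> fresh_leaf_probe S i l) = p ^ n * ?P (fresh_leaf_probe S i l)"
    if "l \<in> L" for l
  proof -
    have path: "bottom_path l \<subseteq> tt_edges n" "card (bottom_path l) = n"
      using that bottom_path_subset_tt_edges card_bottom_path by (auto simp: L_def)
    have "?P ({\<omega>. bottom_open \<omega> l} \<inter> fresh_leaf_probe S i l)
        = ?P {\<omega>. bottom_open \<omega> l} * ?P (fresh_leaf_probe S i l)"
      unfolding TT_def
    proof (rule prob_Pi_pmf_Int_indep[OF finite_tt_edges path(1)])
      fix f g :: "edge \<Rightarrow> bool"
      assume "\<forall>x\<in>bottom_path l. f x = g x"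
      then show "f \<in> {\<omega>. bottom_open \<omega> l} \<longleftrightarrow> g \<in> {\<omega>. bottom_open \<omega> l}"
        by (simp add: bottom_open_def)
    next
      fix f g :: "edge \<Rightarrow> bool"
      assume "\<forall>x\<in>tt_edges n - bottom_path l. f x = g x"
      then show "f \<in> fresh_leaf_probe S i l \<longleftrightarrow> g \<in> fresh_leaf_probe S i l"
        using fresh_leaf_probe_cong[where S=S, OF probes, where \<omega>=f and \<omega>'=g]
          fresh_leaf_probe_cong[where S=S, OF probes, where \<omega>=g and \<omega>'=f]
        by auto
    qed
    also have "?P {\<omega>. bottom_open \<omega> l} = p ^ n"
      unfolding TT_def bottom_open_def
      using prob_Pi_pmf_bernoulli_all[OF finite_tt_edges path(1) assms(2,3)] path(2) by simp
    finally show ?thesis .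
  qed
  have "{\<omega>. \<exists>l. length l = n \<and> \<omega> \<in> fresh_leaf_probe S i l \<and> bottom_open \<omega> l}
      = (\<Union>l\<in>L. {\<omega>. bottom_open \<omega> l} \<inter> fresh_leaf_probe S i l)"
    by (auto simp: L_def)
  also have "?P \<dots> \<le> (\<Sum>l\<in>L. ?P ({\<omega>. bottom_open \<omega> l} \<inter> fresh_leaf_probe S i l))"
    using \<open>finite L\<close> by (intro measure_pmf.finite_measure_subadditive_finite) auto
  also have "\<dots> = p ^ n * (\<Sum>l\<in>L. ?P (fresh_leaf_probe S i l))"
    using indep by (simp add: sum_distrib_left)
  also have "(\<Sum>l\<in>L. ?P (fresh_leaf_probe S i l)) = ?P (\<Union>l\<in>L. fresh_leaf_probe S i l)"
    using \<open>finite L\<close> by (intro measure_pmf.finite_measure_finite_Union[symmetric])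
      (auto simp: disjoint_family_on_def fresh_leaf_probe_def)
  also have "p ^ n * \<dots> \<le> p ^ n"
    using assms(2,3) by (intro mult_left_le) simp_all
  finally show ?thesis .
qed

lemma prob_roots_conn_few_queries_le:
  assumes "1 \<le> n" "local_routing n (root n True) (root n False) S" "0 \<le> p" "p \<le> 1" "0 \<le> x"
  shows "measure_pmf.prob (TT n p) {\<omega>. roots_conn n \<omega>
            \<and> real (num_queries S \<omega>) < x} \<le> x * p ^ n"
proof -
  let ?P = "measure_pmf.prob (TT n p)"
  define m where "m = nat \<lfloor>x\<rfloor>"
  define fresh_open where
    "fresh_open = (\<lambda>i. {\<omega>. \<exists>l. length l = n \<and> \<omega> \<in> fresh_leaf_probe S i l \<and> bottom_open \<omega> l})"
  have "{\<omega>. roots_conn n \<omega> \<and> real (num_queries S \<omega>) < x}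
      \<subseteq> (\<Union>i<m. fresh_open i)"
  proof safe
    fix \<omega>
    assume conn: "roots_conn n \<omega>"
      and few: "real (num_queries S \<omega>) < x"
    obtain i l where "i < num_queries S \<omega>" "length l = n" "\<omega> \<in> fresh_leaf_probe S i l" "bottom_open \<omega> l"
      using local_routing_fresh_open_leaf_probe[OF assms(1,2) conn] by blast
    moreover have "num_queries S \<omega> \<le> m"
      using few unfolding m_def by linarith
    ultimately show "\<omega> \<in> (\<Union>i<m. fresh_open i)"
      unfolding fresh_open_def by auto
  qed
  then have "?P {\<omega>. roots_conn n \<omega> \<and> real (num_queries S \<omega>) < x}
      \<le> ?P (\<Union>i<m. fresh_open i)"
    by (intro measure_pmf.finite_measure_mono) auto
  also have "\<dots> \<le> (\<Sum>i<m. ?P (fresh_open i))"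
    by (intro measure_pmf.finite_measure_subadditive_finite) auto
  also have "\<dots> \<le> real m * p ^ n"
    using sum_mono[of "{..<m}" "\<lambda>i. ?P (fresh_open i)" "\<lambda>_. p ^ n"]
      prob_fresh_open_leaf_probe_le[OF local_routing_probe(1)[OF assms(2)] assms(3,4)]
    unfolding fresh_open_def by simp
  also have "\<dots> \<le> x * p ^ n"
    using assms(3,5) unfolding m_def by (intro mult_right_mono) simp_all
  finally show ?thesis .
qed

section \<open>Connection probability of the roots\<close>

text \<open>The subtrees of both trees below the children \<open>b\<close> of the roots form a copy of \<open>TT\<^sub>n\<close> in
  \<open>TT\<^sub>n\<^sub>+\<^sub>1\<close>.\<close>

definition sub_config :: "bool \<Rightarrow> (edge \<Rightarrow> bool) \<Rightarrow> edge \<Rightarrow> bool" where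
  "sub_config b \<omega> = (\<lambda>(t, w). \<omega> (t, b # w))"

definition sub_vtx :: "bool \<Rightarrow> vtx \<Rightarrow> vtx" where
  "sub_vtx b = (\<lambda>(t, s). (t, b # s))"

lemma node_Cons: "node (Suc n) t (b # s) = sub_vtx b (node n t s)"
  by (simp add: node_def sub_vtx_def)

lemma sub_vtx_eq_iff: "sub_vtx b x = sub_vtx b y \<longleftrightarrow> x = y"
  by (cases x; cases y) (simp add: sub_vtx_def)

lemma adj_in_sub_config:
  assumes "adj_in n (open_edges (sub_config b \<omega>)) x y"
  shows "adj_in (Suc n) (open_edges \<omega>) (sub_vtx b x) (sub_vtx b y)"
proof -
  obtain t w where e: "(t, w) \<in> open_edges (sub_config b \<omega>)" "(t, w) \<in> tt_edges n" "x \<noteq> y"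
    "endpoints n (t, w) = {x, y}"
    using assms unfolding adj_in_def by auto
  then have "w \<noteq> []"
    by (auto simp: tt_edges_def)
  then have "endpoints (Suc n) (t, b # w) = sub_vtx b ` endpoints n (t, w)"
    by (simp add: endpoints_def node_Cons)
  moreover have "(t, b # w) \<in> open_edges \<omega> \<inter> tt_edges (Suc n)"
    using e(1,2) by (auto simp: open_edges_def sub_config_def tt_edges_def)
  ultimately show ?thesis
    using e(3,4) unfolding adj_in_def by (auto simp: sub_vtx_eq_iff)
qed

lemma conn_in_sub_config:
  "conn_in n (open_edges (sub_config b \<omega>)) x y \<Longrightarrow>
   conn_in (Suc n) (open_edges \<omega>) (sub_vtx b x) (sub_vtx b y)"
  unfolding conn_in_def
  by (induction rule: rtranclp_induct) (auto intro: rtranclp.rtrancl_into_rtrancl adj_in_sub_config)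

lemma roots_conn_SucI:
  assumes "roots_conn n (sub_config b \<omega>)" "\<omega> (True, [b])" "\<omega> (False, [b])"
  shows "roots_conn (Suc n) \<omega>"
proof -
  have "sub_vtx b (root n True) = node (Suc n) True [b]"
    by (simp add: root_def node_Cons)
  then have "adj_in (Suc n) (open_edges \<omega>) (root (Suc n) True) (sub_vtx b (root n True))"
    using assms(2) unfolding adj_in_def
    by (intro bexI[of _ "(True, [b])"])
      (auto simp: endpoints_def root_def open_edges_def tt_edges_def node_def)
  moreover have "sub_vtx b (root n False) = node (Suc n) False [b]"
    by (simp add: root_def sub_vtx_def)
  then have "adj_in (Suc n) (open_edges \<omega>) (sub_vtx b (root n False)) (root (Suc n) False)"
    using assms(3) unfolding adj_in_def
    by (intro bexI[of _ "(False, [b])"])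
      (auto simp: endpoints_def root_def open_edges_def tt_edges_def node_def)
  ultimately show ?thesis
    using conn_in_sub_config[OF assms(1)] unfolding conn_in_def
    by (meson converse_rtranclp_into_rtranclp rtranclp.rtrancl_into_rtrancl)
qed

lemma conn_in_sub_config_cong:
  assumes "\<And>e. e \<in> tt_edges n \<Longrightarrow> sub_config b f e = sub_config b g e"
  shows "conn_in n (open_edges (sub_config b f)) x y = conn_in n (open_edges (sub_config b g)) x y"
proof -
  have "open_edges (sub_config b f) \<inter> tt_edges n = open_edges (sub_config b g) \<inter> tt_edges n"
    using assms by (auto simp: open_edges_def)
  then show ?thesis
    by (metis conn_in_Int_tt_edges)
qed

lemma TT_eq_map_sub_config:
  "TT n p = map_pmf (\<lambda>\<omega> e. if e \<in> tt_edges n then sub_config b \<omega> e else False) (TT (Suc n) p)"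
proof -
  define h where "h = (\<lambda>(t :: bool, w :: bool list). (t, b # w))"
  define B where "B = h ` tt_edges n"
  have "inj h"
    by (auto simp: h_def inj_def)
  then have h_in_B: "h e \<in> B \<longleftrightarrow> e \<in> tt_edges n" for e
    unfolding B_def by (auto dest: injD)
  have "TT n p = map_pmf (\<lambda>g. g \<circ> h) (Pi_pmf B False (\<lambda>_. bernoulli_pmf p))"
    unfolding TT_def
  proof (rule Pi_pmf_bij_betw[OF finite_tt_edges])
    show "bij_betw h (tt_edges n) B"
      unfolding B_def using \<open>inj h\<close> by (simp add: bij_betw_imageI inj_on_subset)
  qed (use h_in_B in blast)
  also have "Pi_pmf B False (\<lambda>_. bernoulli_pmf p) =
      map_pmf (\<lambda>f e. if e \<in> B then f e else False) (TT (Suc n) p)"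
    unfolding TT_def by (rule Pi_pmf_subset[OF finite_tt_edges]) (auto simp: B_def h_def tt_edges_def)
  also have "map_pmf (\<lambda>g. g \<circ> h) \<dots>
      = map_pmf (\<lambda>\<omega> e. if e \<in> tt_edges n then sub_config b \<omega> e else False) (TT (Suc n) p)"
    unfolding map_pmf_comp using h_in_B
    by (intro map_pmf_cong refl ext) (auto simp: sub_config_def h_def split: prod.splits)
  finally show ?thesis .
qed

definition conn_prob :: "nat \<Rightarrow> real \<Rightarrow> real" where
  "conn_prob n p = measure_pmf.prob (TT n p) {\<omega>. roots_conn n \<omega>}"

lemma prob_roots_conn_sub_config:
  "measure_pmf.prob (TT (Suc n) p) {\<omega>. roots_conn n (sub_config b \<omega>)} = conn_prob n p"
proof -
  have "open_edges (\<lambda>e. if e \<in> tt_edges n then sub_config b \<omega> e else False) \<inter> tt_edges n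
      = open_edges (sub_config b \<omega>) \<inter> tt_edges n" for \<omega>
    by (auto simp: open_edges_def)
  then have "(\<lambda>\<omega> e. if e \<in> tt_edges n then sub_config b \<omega> e else False) -` {\<omega>. roots_conn n \<omega>}
      = {\<omega>. roots_conn n (sub_config b \<omega>)}"
    by (auto simp flip: conn_in_Int_tt_edges[of n "open_edges _"])
  then show ?thesis
    unfolding conn_prob_def by (subst TT_eq_map_sub_config[of n p b]) simp
qed

definition conn_via_child :: "nat \<Rightarrow> bool \<Rightarrow> (edge \<Rightarrow> bool) set" where
  "conn_via_child n b = {\<omega>. \<omega> (True, [b]) \<and> \<omega> (False, [b]) \<and> roots_conn n (sub_config b \<omega>)}"

lemma conn_via_child_cong:
  assumes "\<And>t w. length w \<le> n \<Longrightarrow> f (t, b # w) = g (t, b # w)"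
  shows "f \<in> conn_via_child n b \<longleftrightarrow> g \<in> conn_via_child n b"
proof -
  have "roots_conn n (sub_config b f) = roots_conn n (sub_config b g)"
    using assms by (intro conn_in_sub_config_cong) (auto simp: sub_config_def tt_edges_def)
  then show ?thesis
    using assms[of "[]"] by (simp add: conn_via_child_def)
qed

lemma prob_conn_via_child:
  assumes "0 \<le> p" "p \<le> 1"
  shows "measure_pmf.prob (TT (Suc n) p) (conn_via_child n b) = p\<^sup>2 * conn_prob n p"
proof -
  let ?P = "measure_pmf.prob (TT (Suc n) p)"
  let ?A = "{(True, [b]), (False, [b])} :: edge set"
  have A: "?A \<subseteq> tt_edges (Suc n)"
    by (auto simp: tt_edges_def)
  have "conn_via_child n b = {\<omega>. \<forall>e\<in>?A. \<omega> e} \<inter> {\<omega>. roots_conn n (sub_config b \<omega>)}"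
    by (auto simp: conn_via_child_def)
  also have "?P \<dots> = ?P {\<omega>. \<forall>e\<in>?A. \<omega> e} * ?P {\<omega>. roots_conn n (sub_config b \<omega>)}"
    unfolding TT_def
  proof (rule prob_Pi_pmf_Int_indep[OF finite_tt_edges A])
    fix f g :: "edge \<Rightarrow> bool"
    assume "\<forall>x\<in>tt_edges (Suc n) - ?A. f x = g x"
    then have "roots_conn n (sub_config b f) = roots_conn n (sub_config b g)"
      by (intro conn_in_sub_config_cong) (auto simp: sub_config_def tt_edges_def)
    then show "f \<in> {\<omega>. roots_conn n (sub_config b \<omega>)} \<longleftrightarrow> g \<in> {\<omega>. roots_conn n (sub_config b \<omega>)}"
      by simp
  qed auto
  also have "?P {\<omega>. \<forall>e\<in>?A. \<omega> e} = p\<^sup>2"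
    unfolding TT_def using prob_Pi_pmf_bernoulli_all[OF finite_tt_edges A assms]
    by (simp add: power2_eq_square)
  finally show ?thesis
    by (simp add: prob_roots_conn_sub_config)
qed

lemma conn_prob_Suc_ge:
  assumes "0 \<le> p" "p \<le> 1"
  shows "2 * (p\<^sup>2 * conn_prob n p) - (p\<^sup>2 * conn_prob n p)\<^sup>2 \<le> conn_prob (Suc n) p"
proof -
  let ?P = "measure_pmf.prob (TT (Suc n) p)"
  let ?A = "{e \<in> tt_edges (Suc n). \<exists>w. snd e = False # w}"
  have indep: "?P (conn_via_child n False \<inter> conn_via_child n True)
      = ?P (conn_via_child n False) * ?P (conn_via_child n True)"
    unfolding TT_def
  proof (rule prob_Pi_pmf_Int_indep[OF finite_tt_edges])
    fix f g :: "edge \<Rightarrow> bool"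
    assume "\<forall>x\<in>?A. f x = g x"
    then show "f \<in> conn_via_child n False \<longleftrightarrow> g \<in> conn_via_child n False"
      by (intro conn_via_child_cong) (auto simp: tt_edges_def)
  next
    fix f g :: "edge \<Rightarrow> bool"
    assume "\<forall>x\<in>tt_edges (Suc n) - ?A. f x = g x"
    then show "f \<in> conn_via_child n True \<longleftrightarrow> g \<in> conn_via_child n True"
      by (intro conn_via_child_cong) (auto simp: tt_edges_def)
  qed blast
  have "2 * (p\<^sup>2 * conn_prob n p) - (p\<^sup>2 * conn_prob n p)\<^sup>2
      = ?P (conn_via_child n False) + ?P (conn_via_child n True)
        - ?P (conn_via_child n False \<inter> conn_via_child n True)"
    using indep prob_conn_via_child[OF assms] by (simp add: power2_eq_square)
  also have "\<dots> = ?P (conn_via_child n False \<union> conn_via_child n True)"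
    by (simp add: measure_pmf.finite_measure_Union' measure_pmf.finite_measure_Diff' Int_commute)
  also have "\<dots> \<le> conn_prob (Suc n) p"
    unfolding conn_prob_def
    by (intro measure_pmf.finite_measure_mono) (auto simp: conn_via_child_def intro: roots_conn_SucI)
  finally show ?thesis .
qed

lemma conn_prob_0: "conn_prob 0 p = 1"
  by (simp add: conn_prob_def root_def conn_in_def node_def)

lemma conn_prob_le_1: "conn_prob n p \<le> 1"
  by (simp add: conn_prob_def)

text \<open>\<open>(2q - 1) / q\<^sup>2\<close> with \<open>q = p\<^sup>2\<close> is the fixed point in \<open>[0, 1]\<close> of the map
  \<open>c \<mapsto> 2qc - (qc)\<^sup>2\<close> from \<open>conn_prob_Suc_ge\<close>, which is monotone on \<open>[0, 1/q]\<close>.\<close>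

lemma conn_prob_ge:
  assumes "0 \<le> p" "p \<le> 1" "1 / 2 < p\<^sup>2"
  shows "(2 * p\<^sup>2 - 1) / p ^ 4 \<le> conn_prob n p"
proof -
  define q where "q = p\<^sup>2"
  define d where "d = (2 * q - 1) / q\<^sup>2"
  have q: "1 / 2 < q" "q \<le> 1"
    using assms by (auto simp: q_def power_le_one)
  have "2 * q - 1 \<le> q\<^sup>2"
    using sum_squares_ge_zero[of "q - 1" 0] by (simp add: power2_eq_square algebra_simps)
  with q have d: "0 \<le> d" "d \<le> 1"
    by (auto simp: d_def)
  have fixed_point: "2 * (q * d) - (q * d)\<^sup>2 = d"
    using q unfolding d_def by (simp add: field_simps power2_eq_square)
  have "d \<le> conn_prob n p"
  proof (induction n)
    case 0
    show ?case
      using d by (simp add: conn_prob_0)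
  next
    case (Suc n)
    let ?c = "conn_prob n p"
    have "q * d \<le> q * ?c" "q * ?c \<le> 1" "q * d \<le> 1"
      using Suc.IH q d conn_prob_le_1[of n p] by (auto intro: mult_le_one)
    then have "0 \<le> (q * ?c - q * d) * (2 - q * ?c - q * d)"
      by simp
    then have "d \<le> 2 * (q * ?c) - (q * ?c)\<^sup>2"
      using fixed_point by (simp add: algebra_simps power2_eq_square)
    also have "\<dots> \<le> conn_prob (Suc n) p"
      using conn_prob_Suc_ge[OF assms(1,2)] by (simp add: q_def)
    finally show ?case .
  qed
  moreover have "q\<^sup>2 = p ^ 4"
    by (simp add: q_def flip: power_mult)
  ultimately show ?thesis
    by (simp add: d_def q_def)
qed

lemma prob_many_queries_given_roots_conn_ge:
  assumes "1 \<le> n" "local_routing n (root n True) (root n False) S"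
    and "0 < p" "p \<le> 1" "1 / 2 < p\<^sup>2" "0 \<le> a"
  shows "1 - p ^ 4 / (2 * p\<^sup>2 - 1) * a \<le>
    measure_pmf.prob (TT n p) {\<omega>. roots_conn n \<omega> \<and> a / p ^ n \<le> real (num_queries S \<omega>)}
    / measure_pmf.prob (TT n p) {\<omega>. roots_conn n \<omega>}"
proof -
  let ?P = "measure_pmf.prob (TT n p)"
  let ?early = "{\<omega>. roots_conn n \<omega> \<and> real (num_queries S \<omega>) < a / p ^ n}"
  have "?P ?early \<le> a"
    using prob_roots_conn_few_queries_le[OF assms(1,2), of p "a / p ^ n"] assms(3-6) by simp
  moreover have "(2 * p\<^sup>2 - 1) / p ^ 4 \<le> ?P {\<omega>. roots_conn n \<omega>}"
    using conn_prob_ge[of p n] assms(3-5) by (simp add: conn_prob_def)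
  moreover have "0 < (2 * p\<^sup>2 - 1) / p ^ 4"
    using assms(3,5) by simp
  ultimately have "1 - a / ((2 * p\<^sup>2 - 1) / p ^ 4)
      \<le> ?P ({\<omega>. roots_conn n \<omega>} - ?early) / ?P {\<omega>. roots_conn n \<omega>}"
    by (intro prob_Diff_div_ge) auto
  moreover have "{\<omega>. roots_conn n \<omega>} - ?early
      = {\<omega>. roots_conn n \<omega> \<and> a / p ^ n \<le> real (num_queries S \<omega>)}"
    by auto
  ultimately show ?thesis
    by (simp add: mult.commute)
qed

theorem mainTheorem6:
  fixes p :: real
  assumes "1 / sqrt 2 < p" and "p < 1"
  shows "\<exists>c>0. \<forall>a>0. \<forall>n\<ge>1. \<forall>S. local_routing n (root n True) (root n False) S \<longrightarrow>
           measure_pmf.prob (TT n p)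
              {\<omega>. conn_in n (open_edges \<omega>) (root n True) (root n False)
                   \<and> a / p ^ n \<le> real (num_queries S \<omega>)}
           / measure_pmf.prob (TT n p) {\<omega>. conn_in n (open_edges \<omega>) (root n True) (root n False)}
           \<ge> 1 - c * a"
proof -
  have "0 < 1 / sqrt (2 :: real)"
    by simp
  with assms have "0 < p" "p \<le> 1"
    by linarith+
  have "(1 / sqrt 2)\<^sup>2 < p\<^sup>2"
    using assms(1) by (intro power_strict_mono) auto
  then have "1 / 2 < p\<^sup>2"
    by (simp add: power_divide)
  then have "0 < p ^ 4 / (2 * p\<^sup>2 - 1)"
    using \<open>0 < p\<close> by simp
  then show ?thesis
    using prob_many_queries_given_roots_conn_ge[OF _ _ \<open>0 < p\<close> \<open>p \<le> 1\<close> \<open>1 / 2 < p\<^sup>2\<close>]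
    by (intro exI[of _ "p ^ 4 / (2 * p\<^sup>2 - 1)"]) auto
qed

end
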